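(* For all $n\ge k\ge1$, $$\mathbf{Sf}_{n,k}(p,q)\big|_{p^0}=q^{n-k}\begin{bmatrix} n-1\\ k-1\end{bmatrix}_q,$$ and for all $n>k\ge3$, $$\mathbf{Sf}_{n,k}(p,q)\big|_{p}=q^{n-k}\sum_{s=1}^{k-2}s\,q^{s-1}\sum_{i=0}^{n-k-1}q^{i(s+1)}\begin{bmatrix} i+k-s-2\\ i\end{bmatrix}_q\begin{bmatrix} s+n-k-i\\ s+1\end{bmatrix}_q.$$
   Context: $F_1(p,q)=q$, $F_2(p,q)=q^2$ and $F_m(p,q)=qF_{m-1}(p,q)+pF_{m-2}(p,q)$ for $m\ge3$. Let $(x)_{\downarrow_{F,p,q,0}}=1$ and $(x)_{\downarrow_{F,p,q,k}}=x(x-F_1(p,q))\cdots(x-F_{k-1}(p,q))$ for $k\ge1$. Define $\mathbf{Sf}_{n,k}(p,q)$ for $0\le k\le n$ by $x^n=\sum_{k=0}^n\mathbf{Sf}_{n,k}(p,q)(x)_{\downarrow_{F,p,q,k}}$; it is a polynomial in $p,q$. For a polynomial $f$ in $p$ (with coefficients polynomials in $q$), $f|_{p^s}$ denotes the coefficient of $p^s$. $[m]_q=1+q+\cdots+q^{m-1}$, $[m]_q!=[m]_q[m-1]_q\cdots[1]_q$ with $[0]_q!=1$, and $\begin{bmatrix} n\\ k\end{bmatrix}_q=\frac{[n]_q!}{[k]_q![n-k]_q!}$. *)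

theory Defs
  imports "HOL-Computational_Algebra.Polynomial"
begin

(* Polynomials in p with coefficients polynomials in q:  int poly poly.
   Outer variable = p, inner variable = q. *)

definition qv :: "int poly" where "qv = [:0, 1:]"
definition Qc :: "int poly poly" where "Qc = [:qv:]"
definition Pv :: "int poly poly" where "Pv = [:0, 1:]"

fun Fpq :: "nat \<Rightarrow> int poly poly" where
  "Fpq 0 = 0"
| "Fpq (Suc 0) = Qc"
| "Fpq (Suc (Suc 0)) = Qc ^ 2"
| "Fpq (Suc (Suc (Suc m))) = Qc * Fpq (Suc (Suc m)) + Pv * Fpq (Suc m)"

(* (x)_{F,p,q,k} as a polynomial in x over Z[q][p] *)
definition fall :: "nat \<Rightarrow> int poly poly poly" where
  "fall k = (if k = 0 then 1 else [:0, 1:] * (\<Prod>i\<in>{1..<k}. [:- Fpq i, 1:]))"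

definition Sf :: "nat \<Rightarrow> nat \<Rightarrow> int poly poly" where
  "Sf n k = (THE c. (\<forall>j>n. c j = 0) \<and>
                    monom 1 n = (\<Sum>j\<le>n. smult (c j) (fall j))) k"

definition qint :: "nat \<Rightarrow> int poly" where
  "qint m = (\<Sum>i<m. qv ^ i)"

definition qfact :: "nat \<Rightarrow> int poly" where
  "qfact m = (\<Prod>i\<in>{1..m}. qint i)"

definition qbinom :: "nat \<Rightarrow> nat \<Rightarrow> int poly" where
  "qbinom n k = qfact n div (qfact k * qfact (n - k))"

end

theory Submission
  imports Defs "HOL-Computational_Algebra.Formal_Power_Series"
begin

text \<open>
  Modulo \<open>p\<^sup>2\<close> we have \<open>F(m) = q^m + (m - 2) q^(m - 2) p\<close>, and \<open>Sf(n, k)\<close> obeys the recurrence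
  \<open>Sf(n + 1, k) = Sf(n, k - 1) + F(k) Sf(n, k)\<close> of Stirling numbers of the second kind. Hence
  the coefficient of \<open>p\<^sup>0\<close> is the complete homogeneous symmetric polynomial
  \<open>h(n - k; q, q^2, ..., q^k)\<close>, which is \<open>q^(n - k)\<close> times a \<open>q\<close>-binomial coefficient,
  and the coefficient of \<open>p\<close> is \<open>\<Sum>j (j - 2) q^(j - 2) h(n - k - 1; q^j, q, q^2, ..., q^k)\<close>,
  where the variable \<open>q^j\<close> occurs twice. Splitting the variables into the two blocks
  \<open>q, ..., q^j\<close> and \<open>q^j, ..., q^k\<close> writes each such \<open>h\<close> as a convolution of two
  \<open>q\<close>-binomial coefficients.
\<close>

subsection \<open>Gaussian binomial coefficients\<close>

fun gauss_binom :: "nat \<Rightarrow> nat \<Rightarrow> int poly" where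
  "gauss_binom n 0 = 1"
| "gauss_binom 0 (Suc k) = 0"
| "gauss_binom (Suc n) (Suc k) = gauss_binom n k + qv ^ Suc k * gauss_binom n (Suc k)"

lemma gauss_binom_eq_0: "n < k \<Longrightarrow> gauss_binom n k = 0"
  by (induction n k rule: gauss_binom.induct) auto

lemma gauss_binom_diag [simp]: "gauss_binom n n = 1"
  by (induction n) (auto simp: gauss_binom_eq_0)

lemma qint_0 [simp]: "qint 0 = 0"
  by (simp add: qint_def)

lemma qfact_0 [simp]: "qfact 0 = 1"
  by (simp add: qfact_def)

lemma qint_Suc: "qint (Suc m) = qint m + qv ^ m"
  by (simp add: qint_def)

lemma qint_add: "qint (a + b) = qint a + qv ^ a * qint b"
  by (induction b) (auto simp: qint_Suc power_add algebra_simps)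

lemma qfact_Suc: "qfact (Suc m) = qfact m * qint (Suc m)"
  by (simp add: qfact_def prod.cl_ivl_Suc)

lemma qint_nonzero: "m \<ge> 1 \<Longrightarrow> qint m \<noteq> 0"
proof
  assume "m \<ge> 1" "qint m = 0"
  have "poly (qint m) 1 = of_nat m" by (simp add: qint_def poly_sum qv_def)
  with \<open>qint m = 0\<close> \<open>m \<ge> 1\<close> show False by simp
qed

lemma qfact_nonzero: "qfact m \<noteq> 0"
  unfolding qfact_def using qint_nonzero by (simp add: prod_zero_iff)

lemma gauss_binom_mult_qfact:
  "k \<le> n \<Longrightarrow> gauss_binom n k * qfact k * qfact (n - k) = qfact n"
proof (induction n arbitrary: k)
  case 0 then show ?case by (simp add: qfact_def)
next
  case (Suc n)
  show ?case
  proof (cases k)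
    case 0 then show ?thesis by simp
  next
    case (Suc j)
    with Suc.prems have "j \<le> n" by simp
    have left: "gauss_binom n j * qfact (Suc j) * qfact (n - j) = qfact n * qint (Suc j)"
      using Suc.IH[OF \<open>j \<le> n\<close>] by (simp add: qfact_Suc algebra_simps)
    have right: "gauss_binom n (Suc j) * qfact (Suc j) * qfact (n - j) = qfact n * qint (n - j)"
    proof (cases "j = n")
      case True then show ?thesis by (simp add: gauss_binom_eq_0 qint_def)
    next
      case False
      with \<open>j \<le> n\<close> have "Suc j \<le> n" "n - j = Suc (n - Suc j)" by simp_all
      then show ?thesis using Suc.IH[of "Suc j"] by (simp add: qfact_Suc algebra_simps)
    qed
    have "qint (Suc n) = qint (Suc j) + qv ^ Suc j * qint (n - j)"
      using qint_add[of "Suc j" "n - j"] \<open>j \<le> n\<close> by simp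
    moreover have "gauss_binom (Suc n) k * qfact k * qfact (Suc n - k)
        = gauss_binom n j * qfact (Suc j) * qfact (n - j)
          + qv ^ Suc j * (gauss_binom n (Suc j) * qfact (Suc j) * qfact (n - j))"
      using \<open>k = Suc j\<close> by (simp add: algebra_simps)
    ultimately show ?thesis
      unfolding left right by (simp add: qfact_Suc algebra_simps)
  qed
qed

lemma qbinom_eq_gauss_binom: "k \<le> n \<Longrightarrow> qbinom n k = gauss_binom n k"
proof -
  assume "k \<le> n"
  then have "qfact n = gauss_binom n k * (qfact k * qfact (n - k))"
    using gauss_binom_mult_qfact by (simp add: mult.assoc)
  then show ?thesis
    unfolding qbinom_def using qfact_nonzero by simp
qed

lemma gauss_binom_symmetric: "gauss_binom (a + b) a = gauss_binom (a + b) b"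
proof -
  have "gauss_binom (a + b) a * (qfact a * qfact b) = gauss_binom (a + b) b * (qfact a * qfact b)"
    using gauss_binom_mult_qfact[of a "a + b"] gauss_binom_mult_qfact[of b "a + b"]
    by (simp add: algebra_simps)
  then show ?thesis using qfact_nonzero by simp
qed

subsection \<open>Complete homogeneous symmetric polynomials\<close>

definition geom_fps :: "'a::comm_ring_1 \<Rightarrow> 'a fps" where
  "geom_fps x = Abs_fps (\<lambda>i. x ^ i)"

definition complete_hom :: "nat \<Rightarrow> 'a::comm_ring_1 list \<Rightarrow> 'a" where
  "complete_hom N xs = fps_nth (\<Prod>x\<leftarrow>xs. geom_fps x) N"

lemma complete_hom_0 [simp]: "complete_hom 0 xs = 1"
  by (induction xs) (auto simp: complete_hom_def geom_fps_def)

lemma complete_hom_Nil_Suc [simp]: "complete_hom (Suc N) [] = 0"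
  by (simp add: complete_hom_def)

lemma complete_hom_Cons_Suc:
  "complete_hom (Suc N) (x # xs) = complete_hom (Suc N) xs + x * complete_hom N (x # xs)"
proof -
  let ?P = "\<Prod>y\<leftarrow>xs. geom_fps y"
  have "geom_fps x = 1 + fps_const x * (fps_X * geom_fps x)"
    by (rule fps_ext) (simp add: geom_fps_def fps_X_mult_nth power_eq_if)
  then have "geom_fps x * ?P = ?P + fps_const x * (fps_X * (geom_fps x * ?P))"
    by (metis (no_types, lifting) distrib_right mult.assoc mult_1)
  from arg_cong[OF this, of "\<lambda>f. fps_nth f (Suc N)"] show ?thesis
    by (simp add: complete_hom_def fps_X_mult_nth)
qed

lemma complete_hom_perm: "mset xs = mset ys \<Longrightarrow> complete_hom N xs = complete_hom N ys"
  unfolding complete_hom_def prod_mset_prod_list[symmetric] mset_map by simp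

lemma complete_hom_Cons:
  "complete_hom N (x # xs)
     = complete_hom N xs + (if N = 0 then 0 else x * complete_hom (N - 1) (x # xs))"
  by (cases N) (simp_all add: complete_hom_Cons_Suc)

lemma complete_hom_Cons_Cons:
  "complete_hom N (x # y # xs)
     = complete_hom N (x # xs) + (if N = 0 then 0 else y * complete_hom (N - 1) (x # y # xs))"
proof -
  have "complete_hom M (x # y # xs) = complete_hom M (y # x # xs)" for M
    by (rule complete_hom_perm) simp
  then show ?thesis using complete_hom_Cons[of N y "x # xs"] by simp
qed

lemma complete_hom_append:
  "complete_hom N (xs @ ys) = (\<Sum>i = 0..N. complete_hom i xs * complete_hom (N - i) ys)"
  by (simp add: complete_hom_def fps_mult_nth)

fun qpowers :: "nat \<Rightarrow> nat \<Rightarrow> int poly list" where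
  "qpowers a 0 = []"
| "qpowers a (Suc m) = qv ^ (a + m) # qpowers a m"

lemma qpowers_add: "qpowers a (m1 + m2) = qpowers (a + m1) m2 @ qpowers a m1"
  by (induction m2) (auto simp: algebra_simps)

lemma complete_hom_qpowers:
  "complete_hom i (qpowers a (Suc m)) = qv ^ (a * i) * gauss_binom (i + m) m"
proof (induction m arbitrary: i)
  case 0 then show ?case
    by (simp add: complete_hom_def geom_fps_def power_mult)
next
  case (Suc m)
  show ?case
  proof (induction i)
    case (Suc i)
    have "complete_hom (Suc i) (qpowers a (Suc (Suc m)))
        = complete_hom (Suc i) (qpowers a (Suc m))
          + qv ^ (a + Suc m) * complete_hom i (qpowers a (Suc (Suc m)))"
      by (simp only: qpowers.simps(2)[of a "Suc m"] complete_hom_Cons_Suc)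
    also have "\<dots> = qv ^ (a * Suc i) * gauss_binom (Suc i + Suc m) (Suc m)"
      using Suc.IH \<open>\<And>i. complete_hom i (qpowers a (Suc m)) = _\<close>[of "Suc i"]
      by (simp add: power_add algebra_simps)
    finally show ?case .
  qed simp
qed

subsection \<open>The recurrence for \<open>Sf\<close>\<close>

lemma Fpq_Suc_Suc_Suc:
  "Fpq (Suc (Suc (Suc m))) = smult qv (Fpq (Suc (Suc m))) + pCons 0 (Fpq (Suc m))"
  by (simp add: Qc_def Pv_def)

lemma coeff_Fpq_0: "m \<ge> 1 \<Longrightarrow> coeff (Fpq m) 0 = qv ^ m"
proof (induction m rule: Fpq.induct)
  case (4 m)
  then show ?case by (simp only: Fpq_Suc_Suc_Suc) simp
qed (simp_all add: Qc_def power2_eq_square)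

lemma coeff_Fpq_1: "coeff (Fpq m) 1 = of_nat (m - 2) * qv ^ (m - 2)"
proof (induction m rule: Fpq.induct)
  case (4 m)
  then show ?case
    by (simp only: Fpq_Suc_Suc_Suc) (simp add: coeff_Fpq_0 algebra_simps)
qed (simp_all add: Qc_def power2_eq_square)

lemma fall_Suc: "fall (Suc j) = fall j * [:- Fpq j, 1:]"
  by (cases j) (auto simp: fall_def prod.op_ivl_Suc mult.assoc)

lemma degree_fall: "degree (fall j) = j" and coeff_fall_degree: "coeff (fall j) j = 1"
proof (induction j)
  case 0
  { case 1 show ?case by (simp add: fall_def) }
  { case 2 show ?case by (simp add: fall_def) }
next
  case (Suc j)
  then have "fall j \<noteq> 0" by auto
  { case 1 show ?case
      unfolding fall_Suc using \<open>fall j \<noteq> 0\<close> Suc by (subst degree_mult_eq) auto }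
  { case 2 show ?case
      unfolding fall_Suc using coeff_mult_degree_sum[of "fall j" "[:- Fpq j, 1:]"] Suc by simp }
qed

lemma x_mult_fall: "[:0, 1:] * fall j = fall (Suc j) + smult (Fpq j) (fall j)"
proof -
  have "[:0, 1:] = [:- Fpq j, 1:] + [:Fpq j:]" by simp
  then show ?thesis by (simp add: fall_Suc algebra_simps)
qed

lemma unitriangular_sum_smult_eq_0:
  fixes b :: "nat \<Rightarrow> 'a::comm_ring_1 poly"
  assumes "\<And>j. degree (b j) \<le> j" "\<And>j. coeff (b j) j = 1"
    and "(\<Sum>j\<le>n. smult (d j) (b j)) = 0"
  shows "\<forall>j\<le>n. d j = 0"
  using assms(3)
proof (induction n)
  case 0
  then have "coeff (smult (d 0) (b 0)) 0 = 0" by simp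
  then show ?case using assms(2)[of 0] by simp
next
  case (Suc n)
  have "degree (\<Sum>j\<le>n. smult (d j) (b j)) \<le> n"
    by (rule degree_sum_le) (auto intro: order.trans[OF degree_smult_le] order.trans[OF assms(1)])
  then have "coeff (\<Sum>j\<le>Suc n. smult (d j) (b j)) (Suc n) = d (Suc n)"
    using assms(2)[of "Suc n"] by (simp add: coeff_eq_0)
  then have "d (Suc n) = 0" unfolding Suc.prems by simp
  with Suc show ?case by (auto simp: le_Suc_eq)
qed

fun Sf_rec :: "nat \<Rightarrow> nat \<Rightarrow> int poly poly" where
  "Sf_rec 0 k = (if k = 0 then 1 else 0)"
| "Sf_rec (Suc n) 0 = 0"
| "Sf_rec (Suc n) (Suc k) = Sf_rec n k + Fpq (Suc k) * Sf_rec n (Suc k)"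

lemma Sf_rec_eq_0: "n < k \<Longrightarrow> Sf_rec n k = 0"
  by (induction n k rule: Sf_rec.induct) auto

lemma monom_eq_sum_Sf_rec_fall: "monom 1 n = (\<Sum>j\<le>n. smult (Sf_rec n j) (fall j))"
proof (induction n)
  case 0 show ?case by (simp add: fall_def)
next
  case (Suc n)
  define g where "g j = smult (Fpq j * Sf_rec n j) (fall j)" for j
  have "monom 1 (Suc n) = [:0, 1:] * monom (1 :: int poly poly) n"
    by (simp add: monom_Suc)
  also have "\<dots> = (\<Sum>j\<le>n. smult (Sf_rec n j) (fall (Suc j))) + (\<Sum>j\<le>n. g j)"
    unfolding Suc.IH sum_distrib_left sum.distrib[symmetric] mult_smult_right x_mult_fall
    by (simp add: g_def smult_add_right mult.commute)
  also have "(\<Sum>j\<le>n. g j) = (\<Sum>j\<le>n. g (Suc j))"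
  proof -
    have "g 0 = 0" "g (Suc n) = 0" by (auto simp: g_def Sf_rec_eq_0)
    then show ?thesis using sum.atMost_Suc_shift[of g n] by simp
  qed
  also have "(\<Sum>j\<le>n. smult (Sf_rec n j) (fall (Suc j))) + (\<Sum>j\<le>n. g (Suc j))
      = (\<Sum>j\<le>Suc n. smult (Sf_rec (Suc n) j) (fall j))"
    by (simp only: sum.atMost_Suc_shift) (simp add: g_def smult_add_left sum.distrib)
  finally show ?case .
qed

lemma Sf_eq_Sf_rec: "Sf n k = Sf_rec n k"
proof -
  let ?P = "\<lambda>c. (\<forall>j>n. c j = 0) \<and> monom 1 n = (\<Sum>j\<le>n. smult (c j) (fall j))"
  have "?P (Sf_rec n)" using Sf_rec_eq_0 monom_eq_sum_Sf_rec_fall by auto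
  moreover have "c = Sf_rec n" if "?P c" for c
  proof
    fix j
    have "(\<Sum>j\<le>n. smult (c j - Sf_rec n j) (fall j)) = 0"
      using that monom_eq_sum_Sf_rec_fall[of n] by (simp add: smult_diff_left sum_subtractf)
    then have "\<forall>j\<le>n. c j - Sf_rec n j = 0"
      by (rule unitriangular_sum_smult_eq_0[OF eq_imp_le[OF degree_fall] coeff_fall_degree])
    then show "c j = Sf_rec n j" using that Sf_rec_eq_0[of n j] by (cases "j \<le> n") auto
  qed
  ultimately have "(THE c. ?P c) = Sf_rec n" by (rule the_equality)
  then show ?thesis unfolding Sf_def by simp
qed

subsection \<open>The coefficients of \<open>p\<^sup>0\<close> and \<open>p\<^sup>1\<close>\<close>

lemma coeff_Sf_rec_0_Suc_Suc:
  "coeff (Sf_rec (Suc n) (Suc k)) 0 = coeff (Sf_rec n k) 0 + qv ^ Suc k * coeff (Sf_rec n (Suc k)) 0"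
  by (simp add: coeff_mult_0 coeff_Fpq_0)

lemma coeff_Sf_rec_1_Suc_Suc:
  "coeff (Sf_rec (Suc n) (Suc k)) 1
     = coeff (Sf_rec n k) 1 + qv ^ Suc k * coeff (Sf_rec n (Suc k)) 1
       + coeff (Fpq (Suc k)) 1 * coeff (Sf_rec n (Suc k)) 0"
  by (simp add: coeff_mult coeff_Fpq_0 algebra_simps)

lemma coeff_Sf_rec_0:
  "coeff (Sf_rec n k) 0 = (if k \<le> n then complete_hom (n - k) (qpowers 1 k) else 0)"
proof (induction n arbitrary: k)
  case (Suc n)
  show ?case
  proof (cases k)
    case (Suc j)
    show ?thesis
      using Suc.IH[of j] Suc.IH[of "Suc j"] complete_hom_Cons[of "n - j" "qv ^ Suc j" "qpowers 1 j"]
      unfolding \<open>k = Suc j\<close> coeff_Sf_rec_0_Suc_Suc by (auto simp: Suc_diff_Suc)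
  qed simp
qed simp

lemma coeff_Sf_rec_1:
  "coeff (Sf_rec n k) 1
     = (if k < n then (\<Sum>i = 1..k. coeff (Fpq i) 1 * complete_hom (n - k - 1) (qv ^ i # qpowers 1 k))
        else 0)"
proof (induction n arbitrary: k)
  case (Suc n)
  show ?case
  proof (cases k)
    case (Suc j)
    show ?thesis
    proof (cases "j < n")
      case False
      then show ?thesis
        using Suc.IH[of j] Suc.IH[of "Suc j"] coeff_Sf_rec_0[of n "Suc j"]
        unfolding \<open>k = Suc j\<close> coeff_Sf_rec_1_Suc_Suc by simp
    next
      case True
      define M where "M = n - j - 1"
      define e where "e = (if M = 0 then 0 else qv ^ Suc j)"
      define G where "G i = coeff (Fpq i) 1" for i
      define H where "H i = complete_hom (M - 1) (qv ^ i # qpowers 1 (Suc j))" for i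
      have cons_top: "complete_hom M (qv ^ i # qpowers 1 (Suc j))
          = complete_hom M (qv ^ i # qpowers 1 j) + e * H i" for i
        using complete_hom_Cons_Cons[of M "qv ^ i" "qv ^ Suc j" "qpowers 1 j"]
        by (simp add: e_def H_def)
      have B_j: "coeff (Sf_rec n j) 1 = (\<Sum>i = 1..j. G i * complete_hom M (qv ^ i # qpowers 1 j))"
        using Suc.IH[of j] True by (simp add: M_def G_def)
      have B_Suc_j: "qv ^ Suc j * coeff (Sf_rec n (Suc j)) 1 = e * (\<Sum>i = 1..Suc j. G i * H i)"
      proof (cases "M = 0")
        case False
        then have "Suc j < n" "n - Suc j - 1 = M - 1" by (simp_all add: M_def)
        then show ?thesis using Suc.IH[of "Suc j"] False by (simp add: e_def G_def H_def)
      next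
        case True
        then have "\<not> Suc j < n" by (simp add: M_def)
        then show ?thesis using Suc.IH[of "Suc j"] True by (simp add: e_def)
      qed
      have A_Suc_j: "coeff (Sf_rec n (Suc j)) 0 = complete_hom M (qv ^ Suc j # qpowers 1 j)"
        using coeff_Sf_rec_0[of n "Suc j"] True by (simp add: M_def)
      have "(\<Sum>i = 1..Suc j. G i * complete_hom M (qv ^ i # qpowers 1 (Suc j)))
          = coeff (Sf_rec n j) 1 + G (Suc j) * coeff (Sf_rec n (Suc j)) 0
            + e * (\<Sum>i = 1..Suc j. G i * H i)"
        unfolding cons_top B_j A_Suc_j by (simp add: algebra_simps sum.distrib sum_distrib_left)
      then show ?thesis
        using True B_Suc_j unfolding \<open>k = Suc j\<close> coeff_Sf_rec_1_Suc_Suc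
        by (simp add: M_def G_def algebra_simps)
    qed
  qed simp
qed simp

text \<open>The repeated variable \<open>q^(b + 1)\<close> is the smallest of the block \<open>q^(b + 1), ..., q^(b + m + 1)\<close>
  and the largest of the block \<open>q, ..., q^(b + 1)\<close>.\<close>

lemma complete_hom_repeated_qpower:
  "complete_hom N (qv ^ Suc b # qpowers 1 (Suc b + m))
     = (\<Sum>i = 0..N. qv ^ (Suc b * i) * gauss_binom (i + m) m * (qv ^ (N - i) * gauss_binom (N - i + b) b))"
proof -
  have "qpowers 1 (Suc b + m) = qpowers (Suc b) (Suc m) @ qpowers 1 b"
    using qpowers_add[of 1 b "Suc m"] by simp
  moreover have "qpowers 1 (Suc b) = qv ^ Suc b # qpowers 1 b"
    by simp
  ultimately have "mset (qv ^ Suc b # qpowers 1 (Suc b + m)) = mset (qpowers (Suc b) (Suc m) @ qpowers 1 (Suc b))"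
    by (simp del: qpowers.simps)
  then show ?thesis
    by (simp add: complete_hom_perm[of _ "_ @ _"] complete_hom_append complete_hom_qpowers
        del: qpowers.simps)
qed

lemma coeff_Sf_0:
  assumes "1 \<le> k" "k \<le> n"
  shows "coeff (Sf n k) 0 = qv ^ (n - k) * qbinom (n - 1) (k - 1)"
proof -
  have "coeff (Sf n k) 0 = complete_hom (n - k) (qpowers 1 (Suc (k - 1)))"
    using assms by (simp add: Sf_eq_Sf_rec coeff_Sf_rec_0)
  also have "\<dots> = qv ^ (n - k) * gauss_binom (n - 1) (k - 1)"
    using assms by (simp only: complete_hom_qpowers) simp
  finally show ?thesis
    using assms by (simp add: qbinom_eq_gauss_binom)
qed

lemma coeff_Sf_1_summand:
  assumes "1 \<le> s" "s + 2 \<le> k" "k < n"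
  shows "coeff (Fpq (s + 2)) 1 * complete_hom (n - k - 1) (qv ^ (s + 2) # qpowers 1 k)
    = qv ^ (n - k) * (of_nat s * qv ^ (s - 1) *
        (\<Sum>i = 0..n - k - 1. qv ^ (i * (s + 1)) * qbinom (i + k - s - 2) i * qbinom (s + n - k - i) (s + 1)))"
proof -
  define N where "N = n - k - 1"
  define r where "r = k - s - 2"
  have "k = Suc (s + 1) + r" using assms by (simp add: r_def)
  then have h: "complete_hom N (qv ^ (s + 2) # qpowers 1 k)
      = (\<Sum>i = 0..N. qv ^ ((s + 2) * i) * gauss_binom (i + r) r
                      * (qv ^ (N - i) * gauss_binom (N - i + (s + 1)) (s + 1)))"
    using complete_hom_repeated_qpower[of N "s + 1" r] by simp
  have summand: "qv ^ ((s + 2) * i) * gauss_binom (i + r) r * (qv ^ (N - i) * gauss_binom (N - i + (s + 1)) (s + 1))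
      = qv ^ N * (qv ^ (i * (s + 1)) * qbinom (i + k - s - 2) i * qbinom (s + n - k - i) (s + 1))"
    if "i \<le> N" for i
  proof -
    have "qbinom (i + k - s - 2) i = gauss_binom (i + r) r"
      using assms qbinom_eq_gauss_binom[of i "i + r"] gauss_binom_symmetric[of i r]
      by (simp add: r_def)
    moreover have "qbinom (s + n - k - i) (s + 1) = gauss_binom (N - i + (s + 1)) (s + 1)"
    proof -
      have "s + n - k - i = N - i + (s + 1)" using assms that by (simp add: N_def)
      then show ?thesis by (simp only: qbinom_eq_gauss_binom le_add2)
    qed
    moreover have "qv ^ ((s + 2) * i) * qv ^ (N - i) = qv ^ N * qv ^ (i * (s + 1))"
      using that by (simp flip: power_add add: algebra_simps)
    ultimately show ?thesis
      by (simp add: mult_ac)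
  qed
  define T where "T i = qv ^ (i * (s + 1)) * qbinom (i + k - s - 2) i * qbinom (s + n - k - i) (s + 1)" for i
  have "complete_hom N (qv ^ (s + 2) # qpowers 1 k) = qv ^ N * (\<Sum>i = 0..N. T i)"
    unfolding h sum_distrib_left T_def by (rule sum.cong[OF refl], rule summand) simp
  moreover have "coeff (Fpq (s + 2)) 1 = of_nat s * qv ^ s"
    unfolding coeff_Fpq_1 by simp
  ultimately have "coeff (Fpq (s + 2)) 1 * complete_hom N (qv ^ (s + 2) # qpowers 1 k)
      = of_nat s * qv ^ s * (qv ^ N * (\<Sum>i = 0..N. T i))"
    by simp
  also have "\<dots> = (qv ^ s * qv ^ N) * (of_nat s * (\<Sum>i = 0..N. T i))"
    by (simp only: ac_simps)
  also have "qv ^ s * qv ^ N = qv ^ (n - k) * qv ^ (s - 1)"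
  proof -
    have "s + N = n - k + (s - 1)" using assms by (simp add: N_def)
    then show ?thesis by (metis power_add)
  qed
  finally show ?thesis
    unfolding N_def[symmetric] T_def[symmetric] by (simp only: ac_simps)
qed

lemma coeff_Sf_1:
  assumes "3 \<le> k" "k < n"
  shows "coeff (Sf n k) 1 = qv ^ (n - k) *
    (\<Sum>s = 1..k - 2. of_nat s * qv ^ (s - 1) *
       (\<Sum>i = 0..n - k - 1. qv ^ (i * (s + 1)) * qbinom (i + k - s - 2) i * qbinom (s + n - k - i) (s + 1)))"
proof -
  define f where "f j = coeff (Fpq j) 1 * complete_hom (n - k - 1) (qv ^ j # qpowers 1 k)" for j
  have "coeff (Sf n k) 1 = (\<Sum>j = 1..k. f j)"
    unfolding Sf_eq_Sf_rec coeff_Sf_rec_1 using assms by (simp add: f_def)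
  also have "\<dots> = (\<Sum>j = 3..k. f j)"
  proof -
    have "f 1 = 0" "f 2 = 0" by (simp_all add: f_def Qc_def power2_eq_square numeral_2_eq_2)
    then show ?thesis using assms by (simp add: sum.atLeast_Suc_atMost numeral_3_eq_3 numeral_2_eq_2)
  qed
  also have "\<dots> = (\<Sum>s = 1..k - 2. f (s + 2))"
  proof -
    have "{3..k} = {1 + 2..k - 2 + 2}" using assms by simp
    then show ?thesis by (simp only: sum.shift_bounds_cl_nat_ivl)
  qed
  also have "\<dots> = (\<Sum>s = 1..k - 2. qv ^ (n - k) * (of_nat s * qv ^ (s - 1) *
       (\<Sum>i = 0..n - k - 1. qv ^ (i * (s + 1)) * qbinom (i + k - s - 2) i * qbinom (s + n - k - i) (s + 1))))"
  proof (rule sum.cong[OF refl])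
    fix s assume "s \<in> {1..k - 2}"
    then show "f (s + 2) = qv ^ (n - k) * (of_nat s * qv ^ (s - 1) *
       (\<Sum>i = 0..n - k - 1. qv ^ (i * (s + 1)) * qbinom (i + k - s - 2) i * qbinom (s + n - k - i) (s + 1)))"
      unfolding f_def using assms by (intro coeff_Sf_1_summand) auto
  qed
  finally show ?thesis
    by (simp only: sum_distrib_left[of "qv ^ (n - k)" _ "{1..k - 2}"])
qed

theorem theorem11:
  shows "(\<forall>n k. 1 \<le> k \<and> k \<le> n \<longrightarrow>
            coeff (Sf n k) 0 = qv ^ (n - k) * qbinom (n - 1) (k - 1))
       \<and> (\<forall>n k. 3 \<le> k \<and> k < n \<longrightarrow>
            coeff (Sf n k) 1 = qv ^ (n - k) *
              (\<Sum>s = 1..k - 2. of_nat s * qv ^ (s - 1) *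
                 (\<Sum>i = 0..n - k - 1. qv ^ (i * (s + 1)) *
                    qbinom (i + k - s - 2) i * qbinom (s + n - k - i) (s + 1))))"
  using coeff_Sf_0 coeff_Sf_1 by blast

end
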